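(* For a non-negative integer $n$ and real $x>0$ small, define $$A_n(x)=2\ln(n!\,x)+\ln|\Gamma(-n-x)|+\ln|\Gamma(-n+x)|-x^2\sum_{k=1}^n\frac1{k^2}.$$ Then for every non-negative integer $n$, $$\lim_{x\to0^+}\frac{1}{x^2}\left[1-\frac{A_n(x)}{A_{n+1}(x)}\right]=\frac{3}{(n+1)^4\pi^2}=\frac{1}{2(n+1)^4\zeta(2)}.$$
   Context: $\Gamma$ is Euler's Gamma function on the real line and $\zeta$ is the Riemann zeta function. *)

theory Defs
  imports "HOL-Analysis.Analysis"
begin

definition A :: "nat \<Rightarrow> real \<Rightarrow> real" where
  "A n x = 2 * ln (fact n * x) + ln \<bar>Gamma (- real n - x)\<bar> + ln \<bar>Gamma (- real n + x)\<bar>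
           - x\<^sup>2 * (\<Sum>k=1..n. 1 / (real k)\<^sup>2)"

definition zeta :: "real \<Rightarrow> real" where
  "zeta s = (\<Sum>k. 1 / (real (Suc k)) powr s)"

end

theory Submission
  imports Defs "HOL-Real_Asymp.Real_Asymp"
begin

text \<open>By the reflection formula, \<open>A\<^sub>0(x) = ln (\<pi>x / sin \<pi>x)\<close>, and by the functional equation of
  \<open>\<Gamma>\<close> each step in \<open>n\<close> adds \<open>-ln (1 - y\<^sup>2) - y\<^sup>2\<close> with \<open>y = x / (n + 1)\<close>.  This increment is
  \<open>x\<^sup>4 / (2(n + 1)\<^sup>4) + O(x\<^sup>6)\<close>, so every \<open>A\<^sub>n(x)\<close> behaves like \<open>\<pi>\<^sup>2 x\<^sup>2 / 6\<close>, and
  \<open>1 - A\<^sub>n/A\<^sub>n\<^sub>+\<^sub>1 = (A\<^sub>n\<^sub>+\<^sub>1 - A\<^sub>n)/A\<^sub>n\<^sub>+\<^sub>1\<close> is asymptotic to \<open>3 x\<^sup>2 / ((n + 1)\<^sup>4 \<pi>\<^sup>2)\<close>.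
  Finally \<open>\<zeta>(2) = \<pi>\<^sup>2/6\<close> by Euler's identity.\<close>

lemma not_Ints_between_0_1:
  fixes x :: "'a :: floor_ceiling"
  assumes "0 < x" "x < 1"
  shows "x \<notin> \<int>"
  using assms frac_eq[of x] frac_gt_0_iff[of x] by simp

lemma minus_of_nat_add_not_nonpos_Ints:
  fixes x :: real
  assumes "x \<notin> \<int>"
  shows "- real n + x \<notin> \<int>\<^sub>\<le>\<^sub>0" and "- real n - x \<notin> \<int>\<^sub>\<le>\<^sub>0"
proof -
  have "- real n + x \<notin> \<int>" and "- real n - x \<notin> \<int>"
  proof -
    show "- real n + x \<notin> \<int>"
      using assms Ints_add[of "- real n + x" "real n"] by auto
    show "- real n - x \<notin> \<int>"
      using assms Ints_minus[of "real n + (- real n - x)"] Ints_add[of "real n" "- real n - x"] by auto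
  qed
  then show "- real n + x \<notin> \<int>\<^sub>\<le>\<^sub>0" and "- real n - x \<notin> \<int>\<^sub>\<le>\<^sub>0"
    using nonpos_Ints_subset_Ints by blast+
qed

lemma Gamma_reflection_real:
  fixes x :: real
  shows "Gamma x * Gamma (- x) = - pi / (x * sin (pi * x))"
proof -
  have "complex_of_real (Gamma x * Gamma (- x)) = complex_of_real (- pi / (x * sin (pi * x)))"
    using Gamma_reflection_complex'[of "complex_of_real x"]
    by (simp add: Gamma_complex_of_real sin_of_real flip: of_real_minus of_real_mult of_real_divide)
  then show ?thesis
    by (simp only: of_real_eq_iff)
qed

lemma A_0:
  assumes "0 < x" "x < 1"
  shows "A 0 x = ln (pi * x / sin (pi * x))"
proof -
  have sin_pos: "sin (pi * x) > 0"
    using assms by (intro sin_gt_zero) auto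
  have "Gamma x > 0"
    using assms by simp
  have "Gamma (- x) \<noteq> 0"
    using minus_of_nat_add_not_nonpos_Ints(2)[OF not_Ints_between_0_1[OF assms], of 0]
    by (simp add: Gamma_eq_zero_iff)
  then have "A 0 x = ln (x\<^sup>2 * \<bar>Gamma x * Gamma (- x)\<bar>)"
    using assms less_imp_neq[OF \<open>Gamma x > 0\<close>, symmetric]
    by (simp add: A_def ln_mult ln_realpow abs_mult)
  also have "x\<^sup>2 * \<bar>Gamma x * Gamma (- x)\<bar> = pi * x / sin (pi * x)"
    using assms sin_pos by (simp add: Gamma_reflection_real power2_eq_square)
  finally show ?thesis .
qed

definition A_increment :: "nat \<Rightarrow> real \<Rightarrow> real" where
  "A_increment n x = - ln (1 - (x / (real n + 1))\<^sup>2) - (x / (real n + 1))\<^sup>2"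

lemma ln_abs_Gamma_minus_of_nat:
  assumes "- real (Suc n) + y \<notin> \<int>\<^sub>\<le>\<^sub>0"
  shows "ln \<bar>Gamma (- real n + y)\<bar> = ln \<bar>y - real (Suc n)\<bar> + ln \<bar>Gamma (- real (Suc n) + y)\<bar>"
proof -
  have "Gamma (- real n + y) = (y - real (Suc n)) * Gamma (- real (Suc n) + y)"
    using Gamma_plus1[OF assms] by (simp add: algebra_simps)
  then have "\<bar>Gamma (- real n + y)\<bar> = \<bar>y - real (Suc n)\<bar> * \<bar>Gamma (- real (Suc n) + y)\<bar>"
    by (simp only: abs_mult)
  moreover have "- real (Suc n) + y \<noteq> 0" and "Gamma (- real (Suc n) + y) \<noteq> 0"
    using assms by (auto simp: Gamma_eq_zero_iff)
  ultimately show ?thesis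
    by (simp add: ln_mult)
qed

lemma A_Suc:
  assumes "0 < x" "x < 1"
  shows "A (Suc n) x = A n x + A_increment n x"
proof -
  define m where "m = real n + 1"
  have m: "m - x > 0" "m + x > 0"
    using assms by (auto simp: m_def)
  have x_not_Int: "x \<notin> \<int>" "- x \<notin> \<int>"
    using not_Ints_between_0_1[OF assms] by (auto simp: minus_in_Ints_iff)
  have Gamma_minus: "ln \<bar>Gamma (- real n - x)\<bar> = ln (m + x) + ln \<bar>Gamma (- real (Suc n) - x)\<bar>"
    using ln_abs_Gamma_minus_of_nat[of n "- x"]
      minus_of_nat_add_not_nonpos_Ints(1)[OF x_not_Int(2), of "Suc n"] m
    by (simp add: m_def)
  have Gamma_plus: "ln \<bar>Gamma (- real n + x)\<bar> = ln (m - x) + ln \<bar>Gamma (- real (Suc n) + x)\<bar>"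
    using ln_abs_Gamma_minus_of_nat[of n x]
      minus_of_nat_add_not_nonpos_Ints(1)[OF x_not_Int(1), of "Suc n"] m
    by (simp add: m_def)
  have fact_Suc: "ln (fact (Suc n) * x) = ln m + ln (fact n * x)"
    using assms by (simp add: m_def ln_mult mult.assoc)
  have "1 - (x / m)\<^sup>2 = (m + x) * (m - x) / m\<^sup>2"
    using m by (simp add: field_simps power2_eq_square)
  then have ln_increment: "ln (1 - (x / m)\<^sup>2) = ln (m + x) + ln (m - x) - 2 * ln m"
    using m by (simp add: ln_mult ln_div ln_realpow)
  have "(\<Sum>k=1..Suc n. 1 / (real k)\<^sup>2) = (\<Sum>k=1..n. 1 / (real k)\<^sup>2) + 1 / m\<^sup>2"
    by (simp add: m_def add.commute)
  then show ?thesis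
    unfolding A_def A_increment_def m_def[symmetric] ln_increment
    using Gamma_minus Gamma_plus fact_Suc by (simp add: power_divide algebra_simps)
qed

lemma A_eq_sum_A_increment:
  assumes "0 < x" "x < 1"
  shows "A n x = ln (pi * x / sin (pi * x)) + (\<Sum>k<n. A_increment k x)"
  by (induction n) (simp_all add: A_0[OF assms] A_Suc[OF assms])

lemma A_increment_asymp:
  "((\<lambda>x. A_increment n x / x ^ 4) \<longlongrightarrow> 1 / (2 * (real n + 1) ^ 4)) (at_right 0)"
proof -
  have "((\<lambda>x. A_increment n x / x ^ 4) \<longlongrightarrow> inverse (real n + 1) ^ 4 / 2) (at_right 0)"
    unfolding A_increment_def by real_asymp
  then show ?thesis
    by (simp add: field_simps)
qed

lemma A_asymp: "((\<lambda>x. A n x / x\<^sup>2) \<longlongrightarrow> pi\<^sup>2 / 6) (at_right 0)"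
proof -
  have "((\<lambda>x. ln (pi * x / sin (pi * x)) / x\<^sup>2 + (\<Sum>k<n. A_increment k x / x ^ 4 * x\<^sup>2))
          \<longlongrightarrow> pi\<^sup>2 / 6 + (\<Sum>k<n. 1 / (2 * (real k + 1) ^ 4) * 0)) (at_right 0)"
  proof (intro tendsto_add tendsto_sum tendsto_mult A_increment_asymp)
    have "((\<lambda>x. ln (pi * x / sin (pi * x)) / x\<^sup>2)
            \<longlongrightarrow> pi * (inverse pi * (inverse pi * (pi * (pi * pi)))) / 6) (at_right 0)"
      by real_asymp
    then show "((\<lambda>x. ln (pi * x / sin (pi * x)) / x\<^sup>2) \<longlongrightarrow> pi\<^sup>2 / 6) (at_right 0)"
      by (simp add: power2_eq_square field_simps)
    show "((\<lambda>x::real. x\<^sup>2) \<longlongrightarrow> 0) (at_right 0)"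
      by real_asymp
  qed
  moreover have "\<forall>\<^sub>F x in at_right 0.
      ln (pi * x / sin (pi * x)) / x\<^sup>2 + (\<Sum>k<n. A_increment k x / x ^ 4 * x\<^sup>2) = A n x / x\<^sup>2"
    using eventually_at_right_real[OF zero_less_one]
  proof eventually_elim
    case (elim x)
    then show ?case
      by (simp add: A_eq_sum_A_increment add_divide_distrib sum_divide_distrib power2_eq_square
          power4_eq_xxxx)
  qed
  ultimately show ?thesis
    by (simp add: Lim_transform_eventually)
qed

lemma zeta_2: "zeta 2 = pi\<^sup>2 / 6"
  using inverse_squares_sums by (simp add: zeta_def sums_iff add.commute)

theorem mainTheorem5:
  fixes n :: nat
  shows "((\<lambda>x. (1 / x\<^sup>2) * (1 - A n x / A (Suc n) x))
            \<longlongrightarrow> 3 / ((real n + 1) ^ 4 * pi\<^sup>2)) (at_right 0)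
         \<and> 3 / ((real n + 1) ^ 4 * pi\<^sup>2) = 1 / (2 * (real n + 1) ^ 4 * zeta 2)"
proof
  have "((\<lambda>x. (A_increment n x / x ^ 4) / (A (Suc n) x / x\<^sup>2))
          \<longlongrightarrow> (1 / (2 * (real n + 1) ^ 4)) / (pi\<^sup>2 / 6)) (at_right 0)"
    by (intro tendsto_divide A_increment_asymp A_asymp) simp
  moreover have "\<forall>\<^sub>F x in at_right 0. A (Suc n) x / x\<^sup>2 > 0"
    using A_asymp by (rule order_tendstoD) simp
  then have "\<forall>\<^sub>F x in at_right 0. (A_increment n x / x ^ 4) / (A (Suc n) x / x\<^sup>2)
                   = (1 / x\<^sup>2) * (1 - A n x / A (Suc n) x)"
    using eventually_at_right_real[OF zero_less_one]
  proof eventually_elim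
    case (elim x)
    then show ?case
      by (auto simp: A_Suc field_simps power2_eq_square power4_eq_xxxx)
  qed
  ultimately show "((\<lambda>x. (1 / x\<^sup>2) * (1 - A n x / A (Suc n) x))
            \<longlongrightarrow> 3 / ((real n + 1) ^ 4 * pi\<^sup>2)) (at_right 0)"
    by (simp add: Lim_transform_eventually field_simps)
  show "3 / ((real n + 1) ^ 4 * pi\<^sup>2) = 1 / (2 * (real n + 1) ^ 4 * zeta 2)"
    by (simp add: zeta_2 field_simps)
qed

end
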